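(* For every integer $r\ge 3$ and every integer $n>6^r$, $$g(r,n)\leq n-\frac{1}{12r}n^{\frac{r-1}{r}}.$$
   Context: A hypergraph is $r$-uniform if every edge contains exactly $r$ vertices. An $r$-uniform hypergraph is $r$-partite if its vertex set can be partitioned into $r$ sets $V_1,\dots,V_r$ such that every edge contains exactly one vertex from each $V_i$. A matching is a set of pairwise vertex-disjoint edges. Given a collection (repetitions allowed) of matchings $M_1,\dots,M_n$ in a hypergraph, a matching $M\subseteq \bigcup_{i=1}^n M_i$ is rainbow if there is an injection $\phi:M\to[n]$ such that every edge $e\in M$ belongs to $M_{\phi(e)}$. $g(r,n)$ denotes the largest integer $s$ such that every collection of $n$ matchings, each of size $n$, in an $r$-partite $r$-uniform hypergraph admits a rainbow matching of size $s$. *)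

theory Defs
  imports Complex_Main
begin

definition r_partite_uniform :: "nat \<Rightarrow> 'v set set \<Rightarrow> bool" where
  "r_partite_uniform r H \<longleftrightarrow>
     (\<exists>V :: nat \<Rightarrow> 'v set.
        (\<forall>i<r. \<forall>j<r. i \<noteq> j \<longrightarrow> V i \<inter> V j = {}) \<and>
        (\<forall>e\<in>H. finite e \<and> card e = r \<and> e \<subseteq> (\<Union>i<r. V i) \<and> (\<forall>i<r. card (e \<inter> V i) = 1)))"

definition matching :: "'v set set \<Rightarrow> bool" where
  "matching M \<longleftrightarrow> (\<forall>e\<in>M. \<forall>f\<in>M. e \<noteq> f \<longrightarrow> e \<inter> f = {})"

text \<open>Collection of n matchings indexed by {0..<n} (standing for [n]).\<close>

definition rainbow :: "nat \<Rightarrow> (nat \<Rightarrow> 'v set set) \<Rightarrow> 'v set set \<Rightarrow> bool" where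
  "rainbow n Ms M \<longleftrightarrow> matching M \<and> M \<subseteq> (\<Union>i<n. Ms i) \<and>
     (\<exists>\<phi>. inj_on \<phi> M \<and> (\<forall>e\<in>M. \<phi> e < n \<and> e \<in> Ms (\<phi> e)))"

text \<open>Vertices are taken from nat (all hypergraphs involved are finite/countable).\<close>

definition g :: "nat \<Rightarrow> nat \<Rightarrow> nat" where
  "g r n = (GREATEST s. \<forall>(H :: nat set set) (Ms :: nat \<Rightarrow> nat set set).
      (r_partite_uniform r H \<and>
       (\<forall>i<n. matching (Ms i) \<and> Ms i \<subseteq> H \<and> finite (Ms i) \<and> card (Ms i) = n))
      \<longrightarrow> (\<exists>M. rainbow n Ms M \<and> finite M \<and> card M = s))"

end

theory Submission
  imports Defs "HOL-Number_Theory.Cong" "HOL-Library.Nat_Bijection"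
begin

(* Let m be the largest odd number <= n. Take ceil(n/2) copies of the diagonal matching
   {(v, ..., v) | v < n} and floor(n/2) copies of a twisted matching whose edge through v has
   v in parts 0 and 3..r-1 and 2v, 2v+1 (mod m) in parts 1 and 2. A rainbow matching consists
   of diagonal edges indexed by A and twisted edges indexed by B, and A must avoid S = B (within
   Z_m) together with the out-neighbourhood of S in the de Bruijn graph x -> 2x, 2x+1 on Z_m.
   This graph expands: |S| (m - |S|) <= L 2^L |boundary S| whenever m <= 2^L, because for
   x in S every B < 2^L gives a walk of length L from x to (2^L x + B) mod m, which must leave S
   if its end does. A rainbow matching of size n - d has |S| close to n/2 and
   |boundary S| <= d + 1, so n^2 = O(L n d) with L about log n; since log n <= r n^(1/r) / 2,
   this forces d >= n^((r-1)/r) / (12 r). *)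

section \<open>Expansion of the doubling map modulo an odd number\<close>

lemma exists_crossing:
  fixes P :: "nat \<Rightarrow> bool"
  assumes "P 0" and "\<not> P L"
  shows "\<exists>t<L. P t \<and> \<not> P (Suc t)"
  using assms
proof (induction L)
  case (Suc L)
  then show ?case by (cases "P L") (auto intro: less_SucI)
qed simp

lemma inj_on_mod_add: "inj_on (\<lambda>x. (c + x) mod m) {..<(m::nat)}"
proof (rule inj_onI)
  fix x x' assume "x \<in> {..<m}" "x' \<in> {..<m}" "(c + x) mod m = (c + x') mod m"
  then show "x = x'"
    by (metis cong_add_lcancel_nat cong_def lessThan_iff mod_less)
qed

lemma inj_on_mod_pow2_mult_add:
  assumes "odd m"
  shows "inj_on (\<lambda>x. (2^k * x + c) mod m) {..<(m::nat)}"
proof (rule inj_onI)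
  fix x x' assume "x \<in> {..<m}" "x' \<in> {..<m}" "(2^k * x + c) mod m = (2^k * x' + c) mod m"
  moreover have "coprime ((2::nat)^k) m" using assms by simp
  ultimately show "x = x'"
    by (metis cong_add_rcancel_nat cong_def cong_mult_lcancel_nat lessThan_iff mod_less)
qed

lemma bij_betw_mod_add: "0 < m \<Longrightarrow> bij_betw (\<lambda>x. (c + x) mod m) {..<(m::nat)} {..<m}"
  by (rule bij_betw_imageI[OF inj_on_mod_add endo_inj_surj[OF _ _ inj_on_mod_add]]) auto

definition debruijn_out :: "nat \<Rightarrow> nat set \<Rightarrow> nat set" where
  "debruijn_out m S = (\<lambda>x. (2*x) mod m) ` S \<union> (\<lambda>x. (2*x + 1) mod m) ` S"

(* Appends the bits of B < 2^L to x one at a time, most significant first: the walk starts at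
   x (for x < m) and ends at (2^L * x + B) mod m after L steps. *)
definition debruijn_walk :: "nat \<Rightarrow> nat \<Rightarrow> nat \<Rightarrow> nat \<Rightarrow> nat \<Rightarrow> nat" where
  "debruijn_walk m L x B t = (2^t * x + B div 2^(L - t)) mod m"

definition leaving_pairs :: "nat \<Rightarrow> nat \<Rightarrow> nat set \<Rightarrow> (nat \<times> nat) set" where
  "leaving_pairs m L S = {(x, B). x \<in> S \<and> B < 2^L \<and> (2^L * x + B) mod m \<notin> S}"

lemma debruijn_walk_Suc:
  assumes "t < L"
  shows "debruijn_walk m L x B (Suc t) =
           (2 * debruijn_walk m L x B t + B div 2^(L - Suc t) mod 2) mod m"
proof -
  define b where "b = B div 2^(L - Suc t)"
  have "(2::nat)^(L - t) = 2^(L - Suc t) * 2"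
    using assms by (metis Suc_diff_Suc power_Suc2)
  then have "B div 2^(L - t) = b div 2" by (simp add: b_def div_mult2_eq)
  moreover have "2^(Suc t) * x + b = 2 * (2^t * x + b div 2) + b mod 2" by simp
  ultimately show ?thesis
    unfolding debruijn_walk_def b_def by (metis mod_add_left_eq mod_mult_right_eq)
qed

lemma debruijn_walk_Suc_in_out:
  "t < L \<Longrightarrow> debruijn_walk m L x B t \<in> S \<Longrightarrow> debruijn_walk m L x B (Suc t) \<in> debruijn_out m S"
  using debruijn_walk_Suc[of t L m x B] unfolding debruijn_out_def
  by (cases "B div 2^(L - Suc t) mod 2 = 0") auto

lemma finite_leaving_pairs: "finite S \<Longrightarrow> finite (leaving_pairs m L S)"
  by (rule finite_subset[of _ "S \<times> {..<2^L}"]) (auto simp: leaving_pairs_def)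

lemma card_leaving_pairs_ge:
  assumes "S \<subseteq> {..<m}" and "m \<le> 2^L"
  shows "card S * (m - card S) \<le> card (leaving_pairs m L S)"
proof -
  have finS: "finite S" using assms(1) finite_subset by blast
  define Q where "Q x = {B \<in> {..<m}. (2^L * x + B) mod m \<in> {..<m} - S}" for x
  have "card (Q x) = m - card S" for x
  proof (cases "m = 0")
    case False
    then have bij: "bij_betw (\<lambda>B. (2^L * x + B) mod m) {..<m} {..<m}"
      by (simp add: bij_betw_mod_add)
    have "bij_betw (\<lambda>B. (2^L * x + B) mod m) (Q x) ({..<m} - S)"
    proof (rule bij_betw_subset[OF bij])
      have "(\<lambda>B. (2^L * x + B) mod m) ` {..<m} = {..<m}"
        using bij by (simp add: bij_betw_def)
      then show "(\<lambda>B. (2^L * x + B) mod m) ` Q x = {..<m} - S"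
        unfolding Q_def by (auto simp: image_iff)
    qed (auto simp: Q_def)
    then have "card (Q x) = card ({..<m} - S)" by (rule bij_betw_same_card)
    then show ?thesis using assms(1) finS by (simp add: card_Diff_subset)
  qed (use assms(1) in \<open>simp add: Q_def\<close>)
  then have "card (Sigma S Q) = card S * (m - card S)"
    using finS by (simp add: card_SigmaI Q_def)
  moreover have "Sigma S Q \<subseteq> leaving_pairs m L S"
    unfolding leaving_pairs_def Q_def using assms(2) by auto
  moreover have "finite (leaving_pairs m L S)" using finS by (rule finite_leaving_pairs)
  ultimately show ?thesis by (metis card_mono)
qed

(* A pair crossing the boundary at step t is determined by B and the end of that step, since
   x -> 2^(t+1) x + c is injective modulo an odd m. *)
lemma card_crossing_pairs_le:
  assumes "odd m" and "S \<subseteq> {..<m}" and "t < L"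
  shows "card {(x, B) \<in> leaving_pairs m L S.
            debruijn_walk m L x B t \<in> S \<and> debruijn_walk m L x B (Suc t) \<notin> S}
         \<le> card (debruijn_out m S - S) * 2^L"
    (is "card ?C \<le> _")
proof -
  define f where "f = (\<lambda>(x, B). (debruijn_walk m L x B (Suc t), B))"
  have "inj_on f ?C"
  proof (rule inj_onI)
    fix p p' assume "p \<in> ?C" "p' \<in> ?C" "f p = f p'"
    moreover obtain x B x' B' where "p = (x, B)" "p' = (x', B')" by fastforce
    ultimately have "x \<in> {..<m}" "x' \<in> {..<m}" "B = B'"
      and "(2^Suc t * x + B div 2^(L - Suc t)) mod m = (2^Suc t * x' + B div 2^(L - Suc t)) mod m"
      using assms(2) by (auto simp: f_def leaving_pairs_def debruijn_walk_def)
    then show "p = p'"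
      using inj_onD[OF inj_on_mod_pow2_mult_add[OF assms(1)]] \<open>p = (x, B)\<close> \<open>p' = (x', B')\<close>
      by blast
  qed
  moreover have "f ` ?C \<subseteq> (debruijn_out m S - S) \<times> {..<2^L}"
    using debruijn_walk_Suc_in_out[OF assms(3)] by (auto simp: f_def leaving_pairs_def)
  moreover have "finite (debruijn_out m S - S)"
    using finite_subset[OF assms(2)] by (simp add: debruijn_out_def)
  ultimately have "card ?C \<le> card ((debruijn_out m S - S) \<times> {..<(2::nat)^L})"
    by (intro card_inj_on_le) auto
  then show ?thesis by (simp add: card_cartesian_product)
qed

lemma card_leaving_pairs_le:
  assumes "odd m" and "S \<subseteq> {..<m}"
  shows "card (leaving_pairs m L S) \<le> L * 2^L * card (debruijn_out m S - S)"
proof -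
  define C where "C t = {(x, B) \<in> leaving_pairs m L S.
      debruijn_walk m L x B t \<in> S \<and> debruijn_walk m L x B (Suc t) \<notin> S}" for t
  have "leaving_pairs m L S \<subseteq> (\<Union>t<L. C t)"
  proof
    fix p assume p: "p \<in> leaving_pairs m L S"
    then obtain x B where "p = (x, B)" "x \<in> S" "B < 2^L" "(2^L * x + B) mod m \<notin> S"
      by (auto simp: leaving_pairs_def)
    moreover have "x < m" using \<open>x \<in> S\<close> assms(2) by auto
    ultimately have "debruijn_walk m L x B 0 \<in> S" "debruijn_walk m L x B L \<notin> S"
      by (simp_all add: debruijn_walk_def)
    then show "p \<in> (\<Union>t<L. C t)"
      using exists_crossing[of "\<lambda>t. debruijn_walk m L x B t \<in> S" L] p \<open>p = (x, B)\<close>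
      by (auto simp: C_def)
  qed
  moreover have "finite (C t)" for t
    using finite_leaving_pairs[OF finite_subset[OF assms(2)]]
    by (rule finite_subset[rotated]) (auto simp: C_def)
  ultimately have "card (leaving_pairs m L S) \<le> card (\<Union>t<L. C t)"
    by (intro card_mono) auto
  also have "\<dots> \<le> (\<Sum>t<L. card (C t))" by (rule card_UN_le) simp
  also have "\<dots> \<le> (\<Sum>t<L. card (debruijn_out m S - S) * 2^L)"
    using card_crossing_pairs_le[OF assms] by (intro sum_mono) (simp add: C_def)
  finally show ?thesis by (simp add: mult_ac)
qed

lemma debruijn_expansion:
  assumes "odd m" and "S \<subseteq> {..<m}" and "m \<le> 2^L"
  shows "card S * (m - card S) \<le> L * 2^L * card (debruijn_out m S - S)"
  using card_leaving_pairs_ge[OF assms(2,3)] card_leaving_pairs_le[OF assms(1,2)] by (rule le_trans)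

lemma debruijn_expansion_real:
  assumes "odd m" and "S \<subseteq> {..<m}" and "m \<le> n"
  obtains L where "2^L \<le> 2 * n" and
    "real (card S) * (real m - real (card S))
       \<le> real L * (2 * real n) * real (card (debruijn_out m S - S))"
proof -
  obtain j where j: "2^j \<le> m" "m < 2^(j+1)" using ex_power_ivl1[of 2 m] odd_pos[OF assms(1)] by auto
  define L a b where "L = j + 1" and "a = card S" and "b = card (debruijn_out m S - S)"
  have "a \<le> m" using card_mono[OF _ assms(2)] by (simp add: a_def)
  have "2^L \<le> 2 * n" using j assms(3) by (simp add: L_def)
  have "m \<le> 2^L" using j(2) by (simp add: L_def)
  then have "a * (m - a) \<le> L * 2^L * b"
    unfolding a_def b_def by (rule debruijn_expansion[OF assms(1,2)])
  then have "real (a * (m - a)) \<le> real (L * 2^L * b)" by (simp only: of_nat_le_iff)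
  then have "real a * (real m - real a) \<le> real L * 2^L * real b"
    using \<open>a \<le> m\<close> by (simp add: of_nat_diff)
  also have "\<dots> \<le> real L * (2 * real n) * real b"
  proof -
    have "real (2^L) \<le> real (2 * n)" using \<open>2^L \<le> 2 * n\<close> by (simp only: of_nat_le_iff)
    then show ?thesis by (intro mult_right_mono mult_left_mono) auto
  qed
  finally show ?thesis using \<open>2^L \<le> 2 * n\<close> that by (simp add: a_def b_def)
qed

section \<open>The twisted collection of matchings\<close>

definition vertex :: "nat \<Rightarrow> nat \<Rightarrow> nat" where
  "vertex i v = prod_encode (i, v)"

definition transversal :: "nat \<Rightarrow> (nat \<Rightarrow> nat) \<Rightarrow> nat set" where
  "transversal r f = (\<lambda>i. vertex i (f i)) ` {..<r}"

lemma vertex_eq_iff [simp]: "vertex i v = vertex j w \<longleftrightarrow> i = j \<and> v = w"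
  by (simp add: vertex_def)

lemma transversal_disjoint_iff:
  "transversal r f \<inter> transversal r f' = {} \<longleftrightarrow> (\<forall>i<r. f i \<noteq> f' i)"
  unfolding transversal_def by auto

lemma transversal_eq_iff: "transversal r f = transversal r f' \<longleftrightarrow> (\<forall>i<r. f i = f' i)"
proof
  assume eq: "transversal r f = transversal r f'"
  show "\<forall>i<r. f i = f' i"
  proof (intro allI impI)
    fix i assume "i < r"
    then have "vertex i (f i) \<in> transversal r f'" using eq unfolding transversal_def by auto
    then show "f i = f' i" unfolding transversal_def by auto
  qed
qed (auto simp: transversal_def)

lemma r_partite_uniform_transversals:
  assumes "\<forall>e\<in>H. \<exists>f. e = transversal r f"
  shows "r_partite_uniform r H"
  unfolding r_partite_uniform_def
proof (intro exI[of _ "\<lambda>i. range (vertex i)"] conjI ballI allI impI)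
  fix e assume "e \<in> H"
  then obtain f where e: "e = transversal r f" using assms by blast
  show "finite e" unfolding e transversal_def by simp
  have "inj_on (\<lambda>i. vertex i (f i)) {..<r}" by (auto intro: inj_onI)
  then show "card e = r" unfolding e transversal_def by (simp add: card_image)
  show "e \<subseteq> (\<Union>i<r. range (vertex i))" unfolding e transversal_def by auto
  fix i assume "i < r"
  then have "e \<inter> range (vertex i) = {vertex i (f i)}" unfolding e transversal_def by auto
  then show "card (e \<inter> range (vertex i)) = 1" by simp
qed auto

definition odd_floor :: "nat \<Rightarrow> nat" where
  "odd_floor n = (if odd n then n else n - 1)"

(* For even n the value v = n - 1 lies outside Z_m; its twisted edge gets the otherwise unused
   value v + n in parts 1 and 2. *)
definition twist :: "nat \<Rightarrow> nat \<Rightarrow> nat \<Rightarrow> nat" where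
  "twist n c v = (if v < odd_floor n then (2*v + c) mod odd_floor n else v + n)"

definition twisted_coord :: "nat \<Rightarrow> nat \<Rightarrow> nat \<Rightarrow> nat" where
  "twisted_coord n v i = (if i = 1 then twist n 0 v else if i = 2 then twist n 1 v else v)"

definition diagonal_edge :: "nat \<Rightarrow> nat \<Rightarrow> nat set" where
  "diagonal_edge r v = transversal r (\<lambda>_. v)"

definition twisted_edge :: "nat \<Rightarrow> nat \<Rightarrow> nat \<Rightarrow> nat set" where
  "twisted_edge r n v = transversal r (twisted_coord n v)"

definition twisted_collection :: "nat \<Rightarrow> nat \<Rightarrow> nat \<Rightarrow> nat set set" where
  "twisted_collection r n i =
     (if i < n - n div 2 then diagonal_edge r ` {..<n} else twisted_edge r n ` {..<n})"

definition twisted_hypergraph :: "nat \<Rightarrow> nat \<Rightarrow> nat set set" where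
  "twisted_hypergraph r n = diagonal_edge r ` {..<n} \<union> twisted_edge r n ` {..<n}"

lemma odd_floor_bounds:
  assumes "n \<ge> 3"
  shows "odd (odd_floor n)" "odd_floor n \<le> n" "n \<le> odd_floor n + 1" "odd_floor n \<ge> 3"
  using assms unfolding odd_floor_def by presburger+

lemma twist_inj:
  assumes "n \<ge> 3" and "twist n c v = twist n c w"
  shows "v = w"
proof -
  define m where "m = odd_floor n"
  have "odd m" "m \<le> n" using odd_floor_bounds[OF assms(1)] by (simp_all add: m_def)
  show ?thesis
  proof (cases "v < m \<and> w < m")
    case True
    moreover have "(2^1 * v + c) mod m = (2^1 * w + c) mod m"
      using True assms(2) by (simp add: twist_def m_def)
    ultimately show ?thesis
      using inj_onD[OF inj_on_mod_pow2_mult_add[OF \<open>odd m\<close>]] by blast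
  next
    case False
    have "twist n c u < n" if "u < m" for u
      using that \<open>m \<le> n\<close> by (auto simp: twist_def m_def intro: less_le_trans[OF mod_less_divisor])
    moreover have "twist n c u = u + n" if "\<not> u < m" for u
      using that by (simp add: twist_def m_def)
    ultimately show ?thesis using False assms(2) by (cases "v < m"; cases "w < m") fastforce+
  qed
qed

lemma twist_0_ne_twist_1:
  assumes "n \<ge> 3" and "w < odd_floor n"
  shows "twist n 0 w \<noteq> twist n 1 w"
proof -
  have "2 \<le> odd_floor n" using odd_floor_bounds(4)[OF assms(1)] by simp
  then have "Suc (2*w) mod odd_floor n \<noteq> (2*w) mod odd_floor n"
    by (cases "Suc (2*w mod odd_floor n) = odd_floor n") (simp_all add: mod_Suc)
  then show ?thesis using assms(2) by (simp add: twist_def)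
qed

lemma diagonal_edges_disjoint: "v \<noteq> w \<Longrightarrow> diagonal_edge r v \<inter> diagonal_edge r w = {}"
  by (simp add: diagonal_edge_def transversal_disjoint_iff)

lemma twisted_edges_disjoint:
  assumes "n \<ge> 3" and "v \<noteq> w"
  shows "twisted_edge r n v \<inter> twisted_edge r n w = {}"
proof -
  have "twist n c v \<noteq> twist n c w" for c using twist_inj[OF assms(1)] assms(2) by blast
  then show ?thesis
    using assms(2) by (simp add: twisted_edge_def twisted_coord_def transversal_disjoint_iff)
qed

lemma diagonal_twisted_edges_disjoint_iff:
  assumes "r \<ge> 3"
  shows "diagonal_edge r v \<inter> twisted_edge r n w = {} \<longleftrightarrow>
           v \<noteq> w \<and> v \<noteq> twist n 0 w \<and> v \<noteq> twist n 1 w"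
  unfolding diagonal_edge_def twisted_edge_def transversal_disjoint_iff
proof
  assume coords: "\<forall>i<r. v \<noteq> twisted_coord n w i"
  show "v \<noteq> w \<and> v \<noteq> twist n 0 w \<and> v \<noteq> twist n 1 w"
    using coords[rule_format, of 0] coords[rule_format, of 1] coords[rule_format, of 2] assms
    by (simp add: twisted_coord_def)
qed (simp add: twisted_coord_def)

lemma diagonal_edge_ne_twisted_edge:
  assumes "r \<ge> 3" and "n \<ge> 3"
  shows "diagonal_edge r v \<noteq> twisted_edge r n w"
proof
  assume "diagonal_edge r v = twisted_edge r n w"
  then have coords: "\<forall>i<r. v = twisted_coord n w i"
    by (simp add: diagonal_edge_def twisted_edge_def transversal_eq_iff)
  then have "v = w" "v = twist n 0 w" "v = twist n 1 w"
    using coords[rule_format, of 0] coords[rule_format, of 1] coords[rule_format, of 2] assms(1)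
    by (simp_all add: twisted_coord_def)
  then show False
    using twist_0_ne_twist_1[OF assms(2), of w] assms(2) by (auto simp: twist_def split: if_splits)
qed

lemma inj_diagonal_edge: "0 < r \<Longrightarrow> inj (diagonal_edge r)"
  by (rule injI) (auto simp: diagonal_edge_def transversal_eq_iff)

lemma inj_twisted_edge: "0 < r \<Longrightarrow> inj (twisted_edge r n)"
  by (rule injI) (auto simp: twisted_edge_def transversal_eq_iff twisted_coord_def)

lemma matching_imageI:
  assumes "\<And>v w. v \<in> A \<Longrightarrow> w \<in> A \<Longrightarrow> v \<noteq> w \<Longrightarrow> f v \<inter> f w = {}"
  shows "matching (f ` A)"
  using assms unfolding matching_def by fastforce

lemma r_partite_uniform_twisted_hypergraph: "r_partite_uniform r (twisted_hypergraph r n)"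
  by (rule r_partite_uniform_transversals)
    (auto simp: twisted_hypergraph_def diagonal_edge_def twisted_edge_def)

lemma twisted_collection_valid:
  assumes "r \<ge> 3" and "n \<ge> 3" and "i < n"
  shows "matching (twisted_collection r n i) \<and> twisted_collection r n i \<subseteq> twisted_hypergraph r n
    \<and> finite (twisted_collection r n i) \<and> card (twisted_collection r n i) = n"
proof -
  have "matching (diagonal_edge r ` {..<n})" "matching (twisted_edge r n ` {..<n})"
    by (simp_all add: matching_imageI diagonal_edges_disjoint twisted_edges_disjoint[OF assms(2)])
  moreover have "card (diagonal_edge r ` {..<n}) = n" "card (twisted_edge r n ` {..<n}) = n"
    using inj_diagonal_edge inj_twisted_edge assms(1)
    by (simp_all add: card_image inj_on_subset[of _ UNIV])
  ultimately show ?thesis by (simp add: twisted_collection_def twisted_hypergraph_def)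
qed

lemma card_le_of_rainbow:
  assumes "rainbow n Ms M" and "M' \<subseteq> M" and "finite I"
    and "\<And>e i. e \<in> M' \<Longrightarrow> i < n \<Longrightarrow> e \<in> Ms i \<Longrightarrow> i \<in> I"
  shows "card M' \<le> card I"
proof -
  obtain \<phi> where "inj_on \<phi> M" and \<phi>: "\<forall>e\<in>M. \<phi> e < n \<and> e \<in> Ms (\<phi> e)"
    using assms(1) unfolding rainbow_def by blast
  have "inj_on \<phi> M'" using \<open>inj_on \<phi> M\<close> assms(2) by (rule inj_on_subset)
  moreover have "\<phi> ` M' \<subseteq> I" using \<phi> assms(2,4) by blast
  ultimately show ?thesis using assms(3) by (rule card_inj_on_le)
qed

lemma subset_twisted_hypergraph_eq:
  assumes "M \<subseteq> twisted_hypergraph r n"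
  shows "M = diagonal_edge r ` {v \<in> {..<n}. diagonal_edge r v \<in> M}
           \<union> twisted_edge r n ` {w \<in> {..<n}. twisted_edge r n w \<in> M}"
proof
  show "M \<subseteq> diagonal_edge r ` {v \<in> {..<n}. diagonal_edge r v \<in> M}
           \<union> twisted_edge r n ` {w \<in> {..<n}. twisted_edge r n w \<in> M}"
  proof
    fix e assume "e \<in> M"
    with assms obtain v where "v < n" "e = diagonal_edge r v \<or> e = twisted_edge r n v"
      by (auto simp: twisted_hypergraph_def)
    with \<open>e \<in> M\<close> show "e \<in> diagonal_edge r ` {v \<in> {..<n}. diagonal_edge r v \<in> M}
           \<union> twisted_edge r n ` {w \<in> {..<n}. twisted_edge r n w \<in> M}" by auto
  qed
qed auto

lemma rainbow_twisted_decomposition: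
  assumes "r \<ge> 3" and "n \<ge> 3" and rainbow: "rainbow n (twisted_collection r n) M"
  obtains A B where "A \<subseteq> {..<n}" and "B \<subseteq> {..<n}" and "card M = card A + card B"
    and "card A \<le> n - n div 2" and "card B \<le> n div 2"
    and "\<And>v w. v \<in> A \<Longrightarrow> w \<in> B \<Longrightarrow> v \<noteq> w \<and> v \<noteq> twist n 0 w \<and> v \<noteq> twist n 1 w"
proof -
  define A where "A = {v \<in> {..<n}. diagonal_edge r v \<in> M}"
  define B where "B = {w \<in> {..<n}. twisted_edge r n w \<in> M}"
  have ne: "diagonal_edge r v \<noteq> twisted_edge r n w" for v w
    using diagonal_edge_ne_twisted_edge[OF assms(1,2)] .
  have "M \<subseteq> (\<Union>i<n. twisted_collection r n i)" using rainbow by (simp add: rainbow_def)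
  also have "\<dots> \<subseteq> twisted_hypergraph r n"
    by (auto simp: twisted_collection_def twisted_hypergraph_def)
  finally have M: "M = diagonal_edge r ` A \<union> twisted_edge r n ` B"
    unfolding A_def B_def by (rule subset_twisted_hypergraph_eq)
  have card_A: "card (diagonal_edge r ` A) = card A"
    and card_B: "card (twisted_edge r n ` B) = card B"
    using assms(1) inj_diagonal_edge inj_twisted_edge
    by (simp_all add: card_image inj_on_subset[OF _ subset_UNIV])
  have "card M = card A + card B"
    unfolding M using ne card_A card_B by (subst card_Un_disjoint) (auto simp: A_def B_def)
  moreover have "card (diagonal_edge r ` A) \<le> card {..<n - n div 2}"
  proof (rule card_le_of_rainbow[OF rainbow])
    fix e i assume "e \<in> diagonal_edge r ` A" "i < n" "e \<in> twisted_collection r n i"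
    then show "i \<in> {..<n - n div 2}" by (auto simp: twisted_collection_def ne split: if_splits)
  qed (auto simp: M)
  moreover have "card (twisted_edge r n ` B) \<le> card {n - n div 2..<n}"
  proof (rule card_le_of_rainbow[OF rainbow])
    fix e i assume "e \<in> twisted_edge r n ` B" "i < n" "e \<in> twisted_collection r n i"
    then show "i \<in> {n - n div 2..<n}"
      by (auto simp: twisted_collection_def ne[symmetric] split: if_splits)
  qed (auto simp: M)
  moreover have "v \<noteq> w \<and> v \<noteq> twist n 0 w \<and> v \<noteq> twist n 1 w" if "v \<in> A" "w \<in> B" for v w
  proof -
    have "diagonal_edge r v \<in> M" "twisted_edge r n w \<in> M" using that by (simp_all add: A_def B_def)
    moreover have "matching M" using rainbow by (simp add: rainbow_def)
    ultimately have "diagonal_edge r v \<inter> twisted_edge r n w = {}"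
      using ne[of v w] unfolding matching_def by blast
    then show ?thesis using diagonal_twisted_edges_disjoint_iff[OF assms(1)] by blast
  qed
  ultimately show ?thesis
    using card_A card_B by (intro that[of A B]) (auto simp: A_def B_def)
qed

lemma card_avoiding_twists_le:
  assumes "n \<ge> 3" and "A \<subseteq> {..<n}" and "B \<subseteq> {..<n}"
    and avoid: "\<And>v w. v \<in> A \<Longrightarrow> w \<in> B \<Longrightarrow> v \<noteq> w \<and> v \<noteq> twist n 0 w \<and> v \<noteq> twist n 1 w"
  defines "S \<equiv> B \<inter> {..<odd_floor n}"
  shows "card B \<le> card S + 1"
    and "card A + card S + card (debruijn_out (odd_floor n) S - S) \<le> n"
proof -
  define m where "m = odd_floor n"
  have m: "0 < m" "m \<le> n" "n \<le> m + 1" using odd_floor_bounds[OF assms(1)] by (auto simp: m_def)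
  have finS: "finite S" by (simp add: S_def)
  have "B \<subseteq> S \<union> {m..<n}" using assms(3) by (auto simp: S_def m_def)
  then have "card B \<le> card S + card {m..<n}"
    using finS by (meson card_Un_le card_mono finite_Un finite_atLeastLessThan le_trans)
  then show "card B \<le> card S + 1" using m by simp
  define X where "X = S \<union> debruijn_out m S"
  have "debruijn_out m S = twist n 0 ` S \<union> twist n 1 ` S"
    by (auto simp: debruijn_out_def S_def twist_def m_def)
  then have "A \<inter> X = {}" using avoid by (auto simp: X_def S_def)
  moreover have "X \<subseteq> {..<m}" using m by (auto simp: X_def S_def m_def debruijn_out_def)
  moreover have "finite A" "finite X"
    using assms(2) \<open>X \<subseteq> {..<m}\<close> by (auto intro: finite_subset)
  moreover have "card (A \<union> X) \<le> card {..<n}"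
    using assms(2) \<open>X \<subseteq> {..<m}\<close> m(2) by (intro card_mono) auto
  ultimately have "card A + card X \<le> n" by (simp add: card_Un_disjoint)
  moreover have "card X = card S + card (debruijn_out m S - S)"
    using finS by (subst card_Un_disjoint[symmetric])
      (auto simp: X_def debruijn_out_def intro: arg_cong[where f = card])
  ultimately show "card A + card S + card (debruijn_out (odd_floor n) S - S) \<le> n"
    by (simp add: m_def)
qed

lemma twelve_mult_le_six_power: "r \<ge> 3 \<Longrightarrow> 12 * r \<le> (6::nat) ^ (r - 1)"
proof (induction r rule: nat_induct_at_least)
  case (Suc r)
  have "12 * Suc r \<le> 6 * (12 * r)" using Suc.hyps by simp
  also have "\<dots> \<le> 6 * 6 ^ (r - 1)" using Suc.IH by simp
  also have "\<dots> = 6 ^ (Suc r - 1)" using Suc.hyps by (cases r) auto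
  finally show ?case .
qed simp

lemma square_le_power2: "k \<ge> 4 \<Longrightarrow> k^2 \<le> (2::nat)^k"
proof (induction k rule: nat_induct_at_least)
  case (Suc k)
  have "(Suc k)^2 = k^2 + 2*k + 1" by (simp add: power2_eq_square)
  also have "\<dots> \<le> 2 * k^2"
    using Suc.hyps mult_right_mono[of 4 k k] unfolding power2_eq_square by linarith
  also have "\<dots> \<le> 2 * 2^k" using Suc.IH by simp
  finally show ?case by simp
qed simp

lemma root_bounds:
  assumes "r \<ge> 3" and "n > 6 ^ r"
  shows "6 < root r (real n)" and "12 * real r * root r (real n) \<le> real n"
proof -
  define y where "y = root r (real n)"
  have r0: "0 < r" using assms(1) by simp
  have "(6::real) ^ r < real n"
    using assms(2) by (metis of_nat_less_iff of_nat_numeral of_nat_power)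
  then have "root r (6 ^ r) < y" unfolding y_def using r0 by simp
  then show y6: "6 < root r (real n)" using r0 by (simp add: real_root_power_cancel y_def)
  have "12 * real r \<le> 6 ^ (r - 1)"
    using twelve_mult_le_six_power[OF assms(1)]
    by (metis of_nat_le_iff of_nat_mult of_nat_numeral of_nat_power)
  also have "\<dots> \<le> y ^ (r - 1)" using y6 by (intro power_mono) (auto simp: y_def)
  finally have "y * (12 * real r) \<le> y * y ^ (r - 1)" using y6 by (simp add: y_def)
  also have "\<dots> = real n" using r0 by (simp add: y_def flip: power_Suc)
  finally show "12 * real r * root r (real n) \<le> real n" by (simp add: y_def mult_ac)
qed

lemma two_mult_log_le:
  fixes y :: real
  assumes "0 < r" and "y \<ge> 4" and "real n \<le> y ^ r" and "2^L \<le> 2 * n"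
  shows "2 * real L \<le> (y + 1) * real r + 1"
proof (cases L)
  case (Suc L')
  define q where "q = nat \<lfloor>y\<rfloor>"
  have q: "real q \<le> y" "y < real q + 1" "q \<ge> 4" unfolding q_def using assms(2) by linarith+
  have "real (2^L') \<le> real n" using assms(4) Suc by simp
  also have "\<dots> < real ((q + 1)^r)"
    using assms(1,3) q(2) power_strict_mono[of y "real q + 1" r] assms(2) by (simp add: add.commute)
  finally have "(2::nat)^L' < (q + 1)^r" by (simp only: of_nat_less_iff)
  then have "(2^L')^2 < ((q + 1)^r)^2" by (simp add: power_strict_mono)
  also have "\<dots> = ((q + 1)^2)^r" by (simp flip: power_mult add: mult.commute)
  also have "\<dots> \<le> (2^(q+1))^r"
    using square_le_power2[of "q+1"] q(3) by (intro power_mono) auto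
  finally have "(2::nat)^(L' * 2) < 2^((q + 1) * r)" by (simp only: power_mult)
  then have "L' * 2 < (q + 1) * r" by (rule power_less_imp_less_exp[rotated]) simp
  then have "2 * L \<le> (q + 1) * r + 1" using Suc by simp
  then have "real (2 * L) \<le> real ((q + 1) * r + 1)" by (simp only: of_nat_le_iff)
  then have "2 * real L \<le> (real q + 1) * real r + 1" by (simp add: algebra_simps)
  also have "\<dots> \<le> (y + 1) * real r + 1" using q(1) by (intro add_right_mono mult_right_mono) auto
  finally show ?thesis .
qed (use assms(2) in simp)

lemma deficit_lower_bound:
  fixes N P a c b L d :: real
  assumes P: "P \<ge> 18" and NP: "12 * P \<le> N" and N: "N \<ge> 217"
    and a: "N - 2*d - 3 \<le> 2*a" and c: "N - 2 \<le> 2*c"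
    and expansion: "a * c \<le> L * (2*N) * b" and b: "b \<le> d + 1"
    and L: "2*L \<le> 11/9 * P" and nonneg: "0 \<le> L" "0 \<le> b"
  shows "N / (12*P) \<le> d"
proof (rule ccontr)
  assume "\<not> N / (12*P) \<le> d"
  then have d: "d < N / (12*P)" by simp
  have "1 \<le> N / (12*P)" using NP P by simp
  then have b': "b \<le> N / (6*P)" using b d by (simp add: field_simps)
  have "N / (12*P) \<le> N / 216" using P N by (intro divide_left_mono) auto
  then have a': "97/100 * N \<le> 2*a" using a d N by linarith
  have c': "99/100 * N \<le> 2*c" using c N by linarith
  have "9603/10000 * N^2 = (97/100 * N) * (99/100 * N)" by (simp add: power2_eq_square)
  also have "\<dots> \<le> (2*a) * (2*c)" by (rule mult_mono) (use a' c' N in linarith)+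
  also have "\<dots> = 4 * (a * c)" by simp
  also have "\<dots> \<le> (2*L) * (4*N) * b" using expansion by simp
  also have "\<dots> \<le> (11/9 * P) * (4*N) * (N / (6*P))"
  proof (rule mult_mono)
    show "(2*L) * (4*N) \<le> (11/9 * P) * (4*N)" using L N by (intro mult_right_mono) auto
  qed (use b' nonneg N P in auto)
  also have "\<dots> = 22/27 * N^2" using P by (simp add: power2_eq_square field_simps)
  finally show False using N by simp
qed

lemma rainbow_twisted_deficit:
  fixes P :: real
  assumes "r \<ge> 3" and "n \<ge> 217" and "rainbow n (twisted_collection r n) M"
    and "P \<ge> 18" and "12 * P \<le> real n"
    and log: "\<And>L. 2^L \<le> 2 * n \<Longrightarrow> 2 * real L \<le> 11/9 * P"
  shows "real n / (12 * P) \<le> real n - real (card M)"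
proof -
  define m where "m = odd_floor n"
  have m: "odd m" "m \<le> n" "n \<le> m + 1" using odd_floor_bounds[of n] assms(2) by (auto simp: m_def)
  obtain A B where AB: "A \<subseteq> {..<n}" "B \<subseteq> {..<n}" "card M = card A + card B"
    "card A \<le> n - n div 2" "card B \<le> n div 2"
    and avoid: "\<And>v w. v \<in> A \<Longrightarrow> w \<in> B \<Longrightarrow> v \<noteq> w \<and> v \<noteq> twist n 0 w \<and> v \<noteq> twist n 1 w"
    using rainbow_twisted_decomposition[OF assms(1) _ assms(3)] assms(2) by auto
  define S where "S = B \<inter> {..<m}"
  have S: "card B \<le> card S + 1" "card A + card S + card (debruijn_out m S - S) \<le> n"
    using card_avoiding_twists_le[OF _ AB(1,2) avoid] assms(2) by (simp_all add: S_def m_def)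
  have "card S \<le> card B" using AB(2) by (intro card_mono) (auto simp: S_def intro: finite_subset)
  obtain L where "2^L \<le> 2 * n" and expansion: "real (card S) * (real m - real (card S))
      \<le> real L * (2 * real n) * real (card (debruijn_out m S - S))"
    using debruijn_expansion_real[OF m(1) _ m(2), of S] by (auto simp: S_def)
  have "2 * card M \<le> n + 3 + 2 * card S" "card M + card (debruijn_out m S - S) \<le> n + 1"
    "n + 2 * card S \<le> 2 * m + 2"
    using AB S \<open>card S \<le> card B\<close> m(3) by linarith+
  then have "2 * real (card M) \<le> real n + 3 + 2 * real (card S)"
    "real (card M) + real (card (debruijn_out m S - S)) \<le> real n + 1"
    "real n + 2 * real (card S) \<le> 2 * real m + 2"
    by (simp_all flip: of_nat_le_iff)
  then show ?thesis
    using assms(2,4,5) expansion log[OF \<open>2^L \<le> 2 * n\<close>]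
    by (intro deficit_lower_bound[where a = "real (card S)" and c = "real m - real (card S)"]) auto
qed

lemma rainbow_twisted_card_le:
  assumes r: "r \<ge> 3" and n: "n > 6 ^ r" and rainbow: "rainbow n (twisted_collection r n) M"
  shows "real (card M) \<le> real n - real n / (12 * real r * root r (real n))"
proof -
  define y where "y = root r (real n)"
  have y: "6 < y" "12 * (real r * y) \<le> real n" using root_bounds[OF r n] by (simp_all add: y_def)
  have "(6::nat)^3 \<le> 6^r" using r by (intro power_increasing) auto
  then have "n \<ge> 217" using n by simp
  have "real r * 6 \<le> real r * y" using y(1) by (intro mult_left_mono) auto
  moreover have "(y + 1) * real r + 1 = real r * y + real r + 1" by (simp add: algebra_simps)
  ultimately have "18 \<le> real r * y" and "(y + 1) * real r + 1 \<le> 11/9 * (real r * y)"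
    using r by linarith+
  moreover have "2 * real L \<le> (y + 1) * real r + 1" if "2^L \<le> 2 * n" for L
    using y(1) r that by (intro two_mult_log_le) (auto simp: y_def)
  ultimately have "real n / (12 * (real r * y)) \<le> real n - real (card M)"
    using y(2) by (intro rainbow_twisted_deficit[OF r \<open>n \<ge> 217\<close> rainbow]) fastforce+
  then show ?thesis by (simp add: y_def mult.assoc)
qed

lemma g_le_of_instance:
  fixes H :: "nat set set" and Ms :: "nat \<Rightarrow> nat set set" and bound :: real
  assumes "r_partite_uniform r H"
    and "\<forall>i<n. matching (Ms i) \<and> Ms i \<subseteq> H \<and> finite (Ms i) \<and> card (Ms i) = n"
    and "\<And>M. rainbow n Ms M \<Longrightarrow> real (card M) \<le> bound"
  shows "real (g r n) \<le> bound"
proof -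
  define Q where "Q s = (\<forall>(H :: nat set set) (Ms :: nat \<Rightarrow> nat set set).
      (r_partite_uniform r H \<and>
       (\<forall>i<n. matching (Ms i) \<and> Ms i \<subseteq> H \<and> finite (Ms i) \<and> card (Ms i) = n))
      \<longrightarrow> (\<exists>M. rainbow n Ms M \<and> finite M \<and> card M = s))" for s
  have Q_le: "real s \<le> bound" if Qs: "Q s" for s
  proof -
    obtain M where "rainbow n Ms M" "card M = s"
      using Qs[unfolded Q_def, rule_format, OF conjI[OF assms(1,2)]] by blast
    then show ?thesis using assms(3) by blast
  qed
  have "Q 0"
    unfolding Q_def by (intro allI impI exI[of _ "{}"]) (simp add: rainbow_def matching_def)
  moreover have "s \<le> nat \<lceil>bound\<rceil>" if "Q s" for s
    using order_trans[OF Q_le[OF that] real_nat_ceiling_ge] by (simp only: of_nat_le_iff)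
  ultimately have "Q (Greatest Q)" by (metis GreatestI_nat)
  moreover have "g r n = Greatest Q" unfolding g_def Q_def by simp
  ultimately show ?thesis using Q_le by simp
qed

theorem theorem1p7:
  fixes r n :: nat
  assumes "r \<ge> 3" and "n > 6 ^ r"
  shows "real (g r n) \<le> real n - (1 / (12 * real r)) * real n powr ((real r - 1) / real r)"
proof -
  have "(6::nat)^1 \<le> 6^r" using assms(1) by (intro power_increasing) auto
  then have "n \<ge> 3" using assms(2) by simp
  have "real (g r n) \<le> real n - real n / (12 * real r * root r (real n))"
    using r_partite_uniform_twisted_hypergraph twisted_collection_valid[OF assms(1) \<open>n \<ge> 3\<close>]
      rainbow_twisted_card_le[OF assms]
    by (intro g_le_of_instance) auto
  moreover have "real n powr ((real r - 1) / real r) = real n / root r (real n)"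
  proof -
    have "(real r - 1) / real r = 1 - 1 / real r" using assms(1) by (simp add: field_simps)
    then show ?thesis using assms(1) by (simp add: powr_diff root_powr_inverse)
  qed
  ultimately show ?thesis by simp
qed

end
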